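(* Let $(\mathcal{A},\mathcal{H},\mathcal{D})$ be a $QC^\infty$ spectral triple with $\mathcal{A}$ commutative, unital and complete, satisfying the first order condition $[[\mathcal{D},a],b]=0$ for all $a,b\in\mathcal{A}$ and the irreducibility condition (the only bounded operators on $\mathcal{H}$ commuting with $\mathcal{D}$ and with all $a\in\mathcal{A}$ are the scalars). Then $\mathcal{A}$ contains no projector other than $0$ and $1$.
   Context: A spectral triple $(\mathcal{A},\mathcal{H},\mathcal{D})$ consists of a unital $*$-algebra $\mathcal{A}$ faithfully represented by bounded operators on a Hilbert space $\mathcal{H}$ and a selfadjoint operator $\mathcal{D}$ with dense domain such that for each $a\in\mathcal{A}$, $[\mathcal{D},a]$ extends to a bounded operator and $a(1+\mathcal{D}^2)^{-1/2}$ is compact. With $\delta(x)=[|\mathcal{D}|,x]$, the triple is $QC^\infty$ if $\mathcal{A}\cup[\mathcal{D},\mathcal{A}]\subseteq\bigcap_{m\ge1}\mathrm{Dom}\,\delta^m$ (where $\mathrm{Dom}\,\delta$ consists of bounded $x$ with $[|\mathcal{D}|,x]$ bounded); "complete" means complete in the topology of the seminorms $a\mapsto\|\delta^m(a)\|$, $\|\delta^m([\mathcal{D},a])\|$. A projector is an element $q$ with $q=q^*=q^2$. *)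

theory Defs
  imports "HOL-Analysis.Analysis"
begin

text \<open>A complex Hilbert space is modelled as a real Hilbert space (type of class
real_inner and complete_space) together with an orthogonal complex structure J
(multiplication by the imaginary unit).\<close>

definition complex_structure :: "('h::real_inner \<Rightarrow> 'h) \<Rightarrow> bool" where
  "complex_structure J \<longleftrightarrow> linear J \<and> (\<forall>x. J (J x) = - x) \<and> (\<forall>x y. inner (J x) (J y) = inner x y)"

definition cscale :: "('h::real_vector \<Rightarrow> 'h) \<Rightarrow> complex \<Rightarrow> 'h \<Rightarrow> 'h" where
  "cscale J c x = Re c *\<^sub>R x + Im c *\<^sub>R J x"

definition cinner :: "('h::real_inner \<Rightarrow> 'h) \<Rightarrow> 'h \<Rightarrow> 'h \<Rightarrow> complex" where
  "cinner J x y = Complex (inner x y) (- inner x (J y))"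

definition cbounded :: "('h::real_normed_vector \<Rightarrow> 'h) \<Rightarrow> ('h \<Rightarrow> 'h) \<Rightarrow> bool" where
  "cbounded J T \<longleftrightarrow> bounded_linear T \<and> (\<forall>x. T (J x) = J (T x))"

definition compact_op :: "('h::real_normed_vector \<Rightarrow> 'h) \<Rightarrow> bool" where
  "compact_op T \<longleftrightarrow> (\<forall>S. bounded S \<longrightarrow> compact (closure (T ` S)))"

text \<open>An (unbounded) operator is a pair (domain, action); the action is only relevant on the domain.\<close>
type_synonym 'h uop = "'h set \<times> ('h \<Rightarrow> 'h)"

definition udom :: "'h uop \<Rightarrow> 'h set" where "udom D = fst D"
definition uapp :: "'h uop \<Rightarrow> 'h \<Rightarrow> 'h" where "uapp D = snd D"

definition densely_defined_clinear :: "('h::real_normed_vector \<Rightarrow> 'h) \<Rightarrow> 'h uop \<Rightarrow> bool" where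
  "densely_defined_clinear J D \<longleftrightarrow>
     subspace (udom D) \<and> J ` udom D \<subseteq> udom D \<and> closure (udom D) = UNIV \<and>
     (\<forall>x\<in>udom D. \<forall>y\<in>udom D. uapp D (x + y) = uapp D x + uapp D y) \<and>
     (\<forall>x\<in>udom D. \<forall>c. uapp D (c *\<^sub>R x) = c *\<^sub>R uapp D x) \<and>
     (\<forall>x\<in>udom D. uapp D (J x) = J (uapp D x))"

text \<open>For a densely defined complex-linear operator on a complex
subspace, the condition with the real inner product (= real part of the complex one) is
equivalent to the one with the complex inner product.\<close>
definition adj_dom :: "'h::real_inner uop \<Rightarrow> 'h set" where
  "adj_dom D = {y. \<exists>z. \<forall>x\<in>udom D. inner y (uapp D x) = inner z x}"

definition selfadjoint_op :: "('h::real_inner \<Rightarrow> 'h) \<Rightarrow> 'h uop \<Rightarrow> bool" where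
  "selfadjoint_op J D \<longleftrightarrow> densely_defined_clinear J D \<and> adj_dom D = udom D \<and>
     (\<forall>x\<in>udom D. \<forall>y\<in>udom D. inner y (uapp D x) = inner (uapp D y) x)"

definition positive_op :: "'h::real_inner uop \<Rightarrow> bool" where
  "positive_op D \<longleftrightarrow> (\<forall>x\<in>udom D. 0 \<le> inner x (uapp D x))"

definition ucomp :: "'h uop \<Rightarrow> 'h uop \<Rightarrow> 'h uop" where
  "ucomp D E = ({x\<in>udom E. uapp E x \<in> udom D}, uapp D \<circ> uapp E)"

definition uop_eq :: "'h uop \<Rightarrow> 'h uop \<Rightarrow> bool" where
  "uop_eq D E \<longleftrightarrow> udom D = udom E \<and> (\<forall>x\<in>udom D. uapp D x = uapp E x)"

definition abs_op :: "('h::real_inner \<Rightarrow> 'h) \<Rightarrow> 'h uop \<Rightarrow> 'h uop" where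
  "abs_op J D = (SOME T. selfadjoint_op J T \<and> positive_op T \<and> uop_eq (ucomp T T) (ucomp D D))"

text \<open>(1 + D^2)^(-1/2): the positive bounded square root of the bounded inverse of 1 + D^2.\<close>
definition resolvent_half :: "('h::{real_inner,complete_space} \<Rightarrow> 'h) \<Rightarrow> 'h uop \<Rightarrow> ('h \<Rightarrow> 'h)" where
  "resolvent_half J D = (SOME R. cbounded J R \<and> adjoint R = R \<and> (\<forall>x. 0 \<le> inner x (R x)) \<and>
      (\<forall>y. R (R y) \<in> udom (ucomp D D) \<and> R (R y) + uapp D (uapp D (R (R y))) = y))"

definition has_bdd_comm :: "('h::real_normed_vector \<Rightarrow> 'h) \<Rightarrow> 'h uop \<Rightarrow> ('h \<Rightarrow> 'h) \<Rightarrow> bool" where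
  "has_bdd_comm J D a \<longleftrightarrow> cbounded J a \<and> a ` udom D \<subseteq> udom D \<and>
     (\<exists>T. cbounded J T \<and> (\<forall>x\<in>udom D. T x = uapp D (a x) - a (uapp D x)))"

text \<open>The (unique, by density) bounded extension of [D,a].\<close>
definition comm :: "('h::real_normed_vector \<Rightarrow> 'h) \<Rightarrow> 'h uop \<Rightarrow> ('h \<Rightarrow> 'h) \<Rightarrow> ('h \<Rightarrow> 'h)" where
  "comm J D a = (SOME T. cbounded J T \<and> (\<forall>x\<in>udom D. T x = uapp D (a x) - a (uapp D x)))"

fun delta_pow :: "('h::real_inner \<Rightarrow> 'h) \<Rightarrow> 'h uop \<Rightarrow> nat \<Rightarrow> ('h \<Rightarrow> 'h) \<Rightarrow> ('h \<Rightarrow> 'h)" where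
  "delta_pow J D 0 x = x"
| "delta_pow J D (Suc m) x = delta_pow J D m (comm J (abs_op J D) x)"

fun in_dom_delta_pow :: "('h::real_inner \<Rightarrow> 'h) \<Rightarrow> 'h uop \<Rightarrow> nat \<Rightarrow> ('h \<Rightarrow> 'h) \<Rightarrow> bool" where
  "in_dom_delta_pow J D 0 x = cbounded J x"
| "in_dom_delta_pow J D (Suc m) x =
     (has_bdd_comm J (abs_op J D) x \<and> in_dom_delta_pow J D m (comm J (abs_op J D) x))"

definition unital_star_algebra :: "('h::{real_inner,complete_space} \<Rightarrow> 'h) \<Rightarrow> ('h \<Rightarrow> 'h) set \<Rightarrow> bool" where
  "unital_star_algebra J A \<longleftrightarrow>
     (\<forall>a\<in>A. cbounded J a) \<and> id \<in> A \<and>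
     (\<forall>a\<in>A. \<forall>b\<in>A. (\<lambda>x. a x + b x) \<in> A) \<and>
     (\<forall>a\<in>A. \<forall>b\<in>A. a \<circ> b \<in> A) \<and>
     (\<forall>a\<in>A. \<forall>c. (\<lambda>x. cscale J c (a x)) \<in> A) \<and>
     (\<forall>a\<in>A. adjoint a \<in> A)"

definition spectral_triple :: "('h::{real_inner,complete_space} \<Rightarrow> 'h) \<Rightarrow> ('h \<Rightarrow> 'h) set \<Rightarrow> 'h uop \<Rightarrow> bool" where
  "spectral_triple J A D \<longleftrightarrow>
     complex_structure J \<and> unital_star_algebra J A \<and> selfadjoint_op J D \<and>
     (\<forall>a\<in>A. has_bdd_comm J D a) \<and>
     (\<forall>a\<in>A. compact_op (a \<circ> resolvent_half J D))"

definition QC_infty :: "('h::{real_inner,complete_space} \<Rightarrow> 'h) \<Rightarrow> ('h \<Rightarrow> 'h) set \<Rightarrow> 'h uop \<Rightarrow> bool" where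
  "QC_infty J A D \<longleftrightarrow>
     (\<forall>a\<in>A. \<forall>m\<ge>1. in_dom_delta_pow J D m a \<and> in_dom_delta_pow J D m (comm J D a))"

text \<open>Completeness of A for the countable family of seminorms
  a \<mapsto> ||delta^m(a)||, a \<mapsto> ||delta^m([D,a])||  (m \<ge> 0); the topology is metrizable,
  so sequential completeness is completeness.\<close>
definition complete_algebra :: "('h::{real_inner,complete_space} \<Rightarrow> 'h) \<Rightarrow> ('h \<Rightarrow> 'h) set \<Rightarrow> 'h uop \<Rightarrow> bool" where
  "complete_algebra J A D \<longleftrightarrow>
     (\<forall>s. (\<forall>n. s n \<in> A) \<longrightarrow>
        (\<forall>m. \<forall>e>0. \<exists>N. \<forall>n\<ge>N. \<forall>k\<ge>N.
            onorm (delta_pow J D m (\<lambda>x. s n x - s k x)) < e \<and>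
            onorm (delta_pow J D m (comm J D (\<lambda>x. s n x - s k x))) < e) \<longrightarrow>
        (\<exists>a\<in>A. \<forall>m. (\<lambda>n. onorm (delta_pow J D m (\<lambda>x. s n x - a x))) \<longlonglongrightarrow> 0 \<and>
                    (\<lambda>n. onorm (delta_pow J D m (comm J D (\<lambda>x. s n x - a x)))) \<longlonglongrightarrow> 0))"

definition commutative_algebra :: "('h \<Rightarrow> 'h) set \<Rightarrow> bool" where
  "commutative_algebra A \<longleftrightarrow> (\<forall>a\<in>A. \<forall>b\<in>A. a \<circ> b = b \<circ> a)"

definition first_order :: "('h::real_normed_vector \<Rightarrow> 'h) \<Rightarrow> ('h \<Rightarrow> 'h) set \<Rightarrow> 'h uop \<Rightarrow> bool" where
  "first_order J A D \<longleftrightarrow> (\<forall>a\<in>A. \<forall>b\<in>A. comm J D a \<circ> b = b \<circ> comm J D a)"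

definition commutes_with_uop :: "('h \<Rightarrow> 'h) \<Rightarrow> 'h uop \<Rightarrow> bool" where
  "commutes_with_uop T D \<longleftrightarrow> T ` udom D \<subseteq> udom D \<and> (\<forall>x\<in>udom D. uapp D (T x) = T (uapp D x))"

definition irreducible_triple :: "('h::real_normed_vector \<Rightarrow> 'h) \<Rightarrow> ('h \<Rightarrow> 'h) set \<Rightarrow> 'h uop \<Rightarrow> bool" where
  "irreducible_triple J A D \<longleftrightarrow>
     (\<forall>T. cbounded J T \<and> commutes_with_uop T D \<and> (\<forall>a\<in>A. T \<circ> a = a \<circ> T) \<longrightarrow>
          (\<exists>c. T = cscale J c))"

definition projector :: "('h::real_inner \<Rightarrow> 'h) \<Rightarrow> bool" where
  "projector q \<longleftrightarrow> q = adjoint q \<and> q \<circ> q = q"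

end

theory Submission
  imports Defs
begin

text \<open>By the Leibniz rule, the commutator C = [D,q] of an idempotent q satisfies C = C q + q C.
  The first order condition makes C commute with q, so C = 2 q C; multiplying by q gives q C = 0,
  hence C = 0. Thus q commutes with D and, A being commutative, with all of A, so irreducibility
  makes q a complex scalar c, and c * c = c forces c = 0 or c = 1.\<close>

lemma complex_structure_inner_self:
  assumes "complex_structure J"
  shows "inner x (J x) = 0"
proof -
  have JJ: "J (J x) = - x" and J_inner: "inner (J x) (J (J x)) = inner x (J x)"
    using assms unfolding complex_structure_def by blast+
  have "inner x (J x) = - inner x (J x)"
    using J_inner by (simp add: JJ inner_commute)
  then show ?thesis by simp
qed

lemma norm_cscale:
  assumes "complex_structure J"
  shows "norm (cscale J c x) = cmod c * norm x"
proof -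
  have "inner (J x) (J x) = inner x x" and "inner x (J x) = 0" "inner (J x) x = 0"
    using assms complex_structure_inner_self[OF assms, of x]
    unfolding complex_structure_def by (auto simp: inner_commute)
  then have "inner (cscale J c x) (cscale J c x) = ((Re c)\<^sup>2 + (Im c)\<^sup>2) * inner x x"
    by (simp add: cscale_def inner_add_left inner_add_right power2_eq_square algebra_simps)
  then have "(norm (cscale J c x))\<^sup>2 = ((Re c)\<^sup>2 + (Im c)\<^sup>2) * (norm x)\<^sup>2"
    by (simp only: power2_norm_eq_inner)
  also have "\<dots> = (cmod c * norm x)\<^sup>2"
    by (simp add: cmod_def power_mult_distrib)
  finally show ?thesis
    by (simp add: power2_eq_iff_nonneg)
qed

lemma cscale_diff_left: "cscale J c x - cscale J d x = cscale J (c - d) x"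
  by (simp add: cscale_def algebra_simps)

lemma cscale_left_inj:
  assumes "complex_structure J" and "x \<noteq> 0" and "cscale J c x = cscale J d x"
  shows "c = d"
proof -
  have "cmod (c - d) * norm x = 0"
    using assms(3) by (simp flip: norm_cscale[OF assms(1)] cscale_diff_left)
  then show ?thesis
    using assms(2) by simp
qed

lemma cscale_cscale:
  assumes "complex_structure J"
  shows "cscale J c (cscale J d x) = cscale J (c * d) x"
proof -
  have "linear J" and "J (J x) = - x"
    using assms unfolding complex_structure_def by auto
  then show ?thesis
    by (simp add: cscale_def linear_add linear_scale algebra_simps)
qed

lemma idempotent_cscale_cases:
  assumes "complex_structure J" and "cscale J c \<circ> cscale J c = cscale J c"
  shows "cscale J c = (\<lambda>x. 0) \<or> cscale J c = id"
proof (cases "\<exists>x::'a. x \<noteq> 0")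
  case True
  then obtain x :: 'a where "x \<noteq> 0" by blast
  have "cscale J (c * c) x = cscale J c x"
    using assms by (metis comp_apply cscale_cscale)
  then have "c * c = c"
    using cscale_left_inj[OF assms(1) \<open>x \<noteq> 0\<close>] by blast
  then have "c = 0 \<or> c = 1"
    by (metis mult_cancel_left2 mult_zero_left)
  then show ?thesis
    by (auto simp: cscale_def fun_eq_iff)
next
  case False
  then show ?thesis by (auto simp: fun_eq_iff)
qed

lemma comm_apply:
  assumes "has_bdd_comm J D a" and "x \<in> udom D"
  shows "comm J D a x = uapp D (a x) - a (uapp D x)"
proof -
  have "\<exists>T. cbounded J T \<and> (\<forall>x\<in>udom D. T x = uapp D (a x) - a (uapp D x))"
    using assms(1) unfolding has_bdd_comm_def by blast
  from someI_ex[OF this] show ?thesis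
    using assms(2) unfolding comm_def by blast
qed

lemma comm_idempotent_leibniz:
  assumes "has_bdd_comm J D q" and "q \<circ> q = q" and "x \<in> udom D"
  shows "comm J D q x = comm J D q (q x) + q (comm J D q x)"
proof -
  have "linear q"
    using assms(1) unfolding has_bdd_comm_def cbounded_def by (simp add: bounded_linear.linear)
  moreover have "q x \<in> udom D"
    using assms(1,3) unfolding has_bdd_comm_def by blast
  moreover have "\<And>y. q (q y) = q y"
    using assms(2) by (metis comp_apply)
  ultimately show ?thesis
    using assms by (simp add: comm_apply linear_diff)
qed

lemma idempotent_commutes_with_uop:
  assumes "has_bdd_comm J D q" and "q \<circ> q = q"
    and "comm J D q \<circ> q = q \<circ> comm J D q"
  shows "commutes_with_uop q D"
  unfolding commutes_with_uop_def
proof safe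
  show "q x \<in> udom D" if "x \<in> udom D" for x
    using assms(1) that unfolding has_bdd_comm_def by blast
next
  fix x assume "x \<in> udom D"
  let ?C = "comm J D q"
  have C_eq: "?C x = q (?C x) + q (?C x)"
    using comm_idempotent_leibniz[OF assms(1,2) \<open>x \<in> udom D\<close>] assms(3)
    by (metis comp_apply)
  have "linear q"
    using assms(1) unfolding has_bdd_comm_def cbounded_def by (simp add: bounded_linear.linear)
  then have "q (?C x) = q (?C x) + q (?C x)"
    using arg_cong[OF C_eq, of q] assms(2) by (simp add: linear_add comp_def fun_eq_iff)
  then have "?C x = 0"
    using C_eq by simp
  then show "uapp D (q x) = q (uapp D x)"
    using comm_apply[OF assms(1) \<open>x \<in> udom D\<close>] by simp
qed

theorem lemma3p16:
  fixes J :: "'h::{real_inner,complete_space} \<Rightarrow> 'h"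
    and A :: "('h \<Rightarrow> 'h) set"
    and D :: "'h uop"
  assumes "spectral_triple J A D"
    and "QC_infty J A D"
    and "commutative_algebra A"
    and "complete_algebra J A D"
    and "first_order J A D"
    and "irreducible_triple J A D"
    and "q \<in> A" and "projector q"
  shows "q = (\<lambda>x. 0) \<or> q = id"
proof -
  have J: "complex_structure J" and "has_bdd_comm J D q" and "cbounded J q"
    using assms(1,7) unfolding spectral_triple_def unital_star_algebra_def by auto
  have idem: "q \<circ> q = q"
    using assms(8) unfolding projector_def by blast
  have "commutes_with_uop q D"
    using idempotent_commutes_with_uop[OF \<open>has_bdd_comm J D q\<close> idem] assms(5,7)
    unfolding first_order_def by blast
  moreover have "\<forall>a\<in>A. q \<circ> a = a \<circ> q"
    using assms(3,7) unfolding commutative_algebra_def by blast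
  ultimately obtain c where "q = cscale J c"
    using assms(6) \<open>cbounded J q\<close> unfolding irreducible_triple_def by blast
  then show ?thesis
    using idempotent_cscale_cases[OF J] idem by simp
qed

end
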